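(* For each $j\geq 1$ and $\tau=\tau_j$, the topological zeta function is the polynomial reciprocal $$1/\zeta (\tau_j, z) = (1-z) \prod_{n=0}^{j} (1-z^{2^n}),$$ whose zeroes all lie on the unit circle $|z|=1$; moreover $\zeta(\tau_j,z)\to\zeta(\tau_\infty,z)$ as $j\to\infty$, where $1/\zeta (\tau_\infty, z) = (1-z) \prod_{n=0}^{\infty} (1-z^{2^n})$.
   Context: For a sequence $s=s_1s_2s_3\dots$ of $0$'s and $1$'s, set $\tau(s)=0.t_1t_2t_3\dots=\sum_{k\geq1}t_k2^{-k}$ with $t_k=\sum_{i=1}^k s_i \pmod 2$. Define kneading sequences $K_1=\overline{1}$, $K_2=\overline{10}$, $K_3=\overline{1011}$, and in general $K_{j+1}$ is obtained from $K_j$ by duplicating the repeating block and reversing its last symbol (equivalently applying the Feigenbaum substitution $1\to10$, $0\to11$ to the repeating block); $K_j$ has period $2^j$ and is the kneading sequence of a unimodal map with a periodic attractor of period $2^j$, and $K_\infty=\lim_j K_j$. Set $\tau_j=\tau(K_j)$ (so $\tau_1=2/3$, $\tau_2=4/5$, $\tau_3=14/17,\dots$) and $\tau_\infty=\lim_j\tau_j=\tau(K_\infty)$. For a unimodal map $f$ with parameter $\tau$, the topological (Artin–Mazur) zeta function is $\zeta(\tau,z)=\exp\sum_{n\geq1}\frac{z^n}{n}\#\mathrm{Per}_n(f)$, which depends only on $\tau$; by Milnor–Thurston, if $\tau=0.\overline{t_1\dots t_n}$ has periodic kneading sequence then $\zeta(\tau,z)=1/\big((1-z)(1+\sum_{k=1}^{n-1}\epsilon_k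 z^k)\big)$ with $\epsilon_k=1-2t_k$, and otherwise $\zeta(\tau,z)=1/\big((1-z)(1+\sum_{k\geq1}\epsilon_k z^k)\big)$. *)

theory Defs
  imports "HOL-Analysis.Analysis"
begin

text \<open>Symbols are 0/1 natural numbers.  Sequences s = s_1 s_2 ... are functions
  nat \<Rightarrow> nat, only the values at indices k \<ge> 1 being relevant.\<close>

definition feig :: "nat list \<Rightarrow> nat list" where
  "feig xs = concat (map (\<lambda>b. if b = 1 then [1, 0] else [1, 1]) xs)"

definition kblock :: "nat \<Rightarrow> nat list" where
  "kblock j = (feig ^^ j) [1]"

definition K :: "nat \<Rightarrow> nat \<Rightarrow> nat" where
  "K j k = kblock j ! ((k - 1) mod length (kblock j))"

definition Kinf :: "nat \<Rightarrow> nat" where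
  "Kinf k = (THE b. eventually (\<lambda>j. K j k = b) sequentially)"

definition tseq :: "(nat \<Rightarrow> nat) \<Rightarrow> nat \<Rightarrow> nat" where
  "tseq s k = (\<Sum>i=1..k. s i) mod 2"

definition tau :: "(nat \<Rightarrow> nat) \<Rightarrow> real" where
  "tau s = (\<Sum>k. real (tseq s (Suc k)) / 2 ^ Suc k)"

definition eps :: "(nat \<Rightarrow> nat) \<Rightarrow> nat \<Rightarrow> complex" where
  "eps s k = 1 - 2 * of_nat (tseq s k)"

definition tperiodic :: "(nat \<Rightarrow> nat) \<Rightarrow> nat \<Rightarrow> bool" where
  "tperiodic s n \<longleftrightarrow> n > 0 \<and> (\<forall>k\<ge>1. tseq s (k + n) = tseq s k)"

text \<open>Milnor--Thurston formula for the topological zeta function, as a function of the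
  kneading sequence (equivalently of \<tau>); n is the (minimal) period in the periodic case.\<close>
definition zeta :: "(nat \<Rightarrow> nat) \<Rightarrow> complex \<Rightarrow> complex" where
  "zeta s z =
     (if \<exists>n. tperiodic s n then
        (let n = (LEAST n. tperiodic s n) in
          1 / ((1 - z) * (1 + (\<Sum>k=1..n-1. eps s k * z ^ k))))
      else 1 / ((1 - z) * (1 + (\<Sum>k. eps s (Suc k) * z ^ Suc k))))"

end

theory Submission
  imports Defs
begin

text \<open>The block of K_(j+1) is the block of K_j followed by a copy of it with its last
  symbol flipped. Since every block contains an odd number of 1s, the parities of K_j satisfy
  t_(k+2^j) = 1 - t_k, i.e. \<epsilon>_(k+2^j) = -\<epsilon>_k, so each doubling of the block multiplies
  the Milnor--Thurston polynomial by 1 - z^(2^j); and the minimal period of t is 2^(j+1)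
  because periods are closed under gcd. K_\<infinity> agrees with K_j on the first 2^(j+1) symbols,
  so the finite products are partial sums of the power series of K_\<infinity>, which for |z| < 1
  therefore converges to the infinite product. Finally K_\<infinity> is a fixed point of the
  Feigenbaum substitution, hence not eventually periodic, so its zeta function is given by
  the aperiodic branch of the formula.\<close>

section \<open>The Feigenbaum substitution\<close>

lemma feig_Nil [simp]: "feig [] = []"
  and feig_Cons [simp]: "feig (x # xs) = (if x = 1 then [1, 0] else [1, 1]) @ feig xs"
  by (simp_all add: feig_def)

lemma feig_append [simp]: "feig (xs @ ys) = feig xs @ feig ys"
  by (simp add: feig_def)

lemma length_feig [simp]: "length (feig xs) = 2 * length xs"
  by (induction xs) auto

lemma length_funpow_feig [simp]: "length ((feig ^^ j) xs) = 2 ^ j * length xs"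
  by (induction j) auto

lemma funpow_feig_append: "(feig ^^ j) (xs @ ys) = (feig ^^ j) xs @ (feig ^^ j) ys"
  by (induction j) auto

lemma nth_feig_even: "i < length xs \<Longrightarrow> feig xs ! (2 * i) = 1"
proof (induction xs arbitrary: i)
  case (Cons x xs)
  then show ?case by (cases i) (auto simp: nth_append)
qed simp

lemma nth_feig_odd: "i < length xs \<Longrightarrow> feig xs ! Suc (2 * i) = (if xs ! i = 1 then 0 else 1)"
proof (induction xs arbitrary: i)
  case (Cons x xs)
  then show ?case by (cases i) (auto simp: nth_append)
qed simp

lemma feig_01: "set xs \<subseteq> {0, 1} \<Longrightarrow> set (feig xs) \<subseteq> {0, 1}"
  by (induction xs) auto

lemma sum_list_feig: "set xs \<subseteq> {0, 1} \<Longrightarrow> sum_list (feig xs) + sum_list xs = 2 * length xs"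
  by (induction xs) auto

lemma butlast_feig: "xs \<noteq> [] \<Longrightarrow> butlast (feig xs) = feig (butlast xs) @ [1]"
  by (induction xs rule: rev_induct) (auto simp: butlast_append)

lemma butlast_funpow_feig: "butlast ((feig ^^ j) [0]) = butlast ((feig ^^ j) [1])"
proof (induction j)
  case (Suc j)
  have "(feig ^^ j) [b] \<noteq> []" for b
    using length_funpow_feig[of j "[b]"] by (auto simp del: length_funpow_feig)
  with Suc show ?case by (simp add: butlast_feig)
qed simp

lemma kblock_Suc: "kblock (Suc j) = feig (kblock j)"
  by (simp add: kblock_def)

lemma length_kblock [simp]: "length (kblock j) = 2 ^ j"
  by (simp add: kblock_def)

lemma kblock_01: "set (kblock j) \<subseteq> {0, 1}"
proof (induction j)
  case (Suc j)
  then show ?case unfolding kblock_Suc by (rule feig_01)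
qed (simp add: kblock_def)

lemma odd_sum_list_kblock: "odd (sum_list (kblock j))"
proof (induction j)
  case (Suc j)
  then show ?case
    using sum_list_feig[OF kblock_01[of j]] by (simp add: kblock_Suc) presburger
qed (simp add: kblock_def)

lemma kblock_Suc_append: "kblock (Suc j) = kblock j @ (feig ^^ j) [0]"
proof -
  have "kblock (Suc j) = (feig ^^ j) ([1] @ [0])"
    by (simp add: kblock_def funpow_Suc_right del: funpow.simps)
  then show ?thesis using funpow_feig_append[of j "[1]" "[0]"] by (simp add: kblock_def)
qed

lemma nth_kblock_Suc: "Suc i < 2 ^ Suc j \<Longrightarrow> kblock (Suc j) ! i = kblock j ! (i mod 2 ^ j)"
proof (cases "i < 2 ^ j")
  case False
  assume "Suc i < 2 ^ Suc j"
  then have "i - 2 ^ j < length (butlast ((feig ^^ j) [0]))" using False by simp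
  then have "(feig ^^ j) [0] ! (i - 2 ^ j) = kblock j ! (i - 2 ^ j)"
    by (metis nth_butlast butlast_funpow_feig kblock_def)
  moreover have "i mod 2 ^ j = i - 2 ^ j" using \<open>Suc i < 2 ^ Suc j\<close> False by (simp add: le_mod_geq)
  ultimately show ?thesis using False by (simp add: kblock_Suc_append nth_append)
qed (simp add: kblock_Suc_append nth_append)

section \<open>Periods and the parity sequence\<close>

definition periodic_from :: "nat \<Rightarrow> (nat \<Rightarrow> 'a) \<Rightarrow> nat \<Rightarrow> bool" where
  "periodic_from a f n \<longleftrightarrow> (\<forall>k\<ge>a. f (k + n) = f k)"

lemma periodic_from_mult:
  assumes "periodic_from a f n"
  shows "periodic_from a f (q * n)"
proof (induction q)
  case (Suc q)
  then show ?case
    using assms unfolding periodic_from_def by (simp add: add.assoc[symmetric])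
qed (simp add: periodic_from_def)

lemma periodic_from_gcd:
  assumes m: "periodic_from a f m" and n: "periodic_from a f n" and "m \<noteq> 0"
  shows "periodic_from a f (gcd m n)"
  unfolding periodic_from_def
proof (intro allI impI)
  fix k assume "a \<le> k"
  obtain x y where xy: "m * x = n * y + gcd m n"
    using bezout_nat[OF \<open>m \<noteq> 0\<close>] by blast
  have "f (k + gcd m n) = f (k + gcd m n + y * n)"
    using periodic_from_mult[OF n, of y] \<open>a \<le> k\<close> by (simp add: periodic_from_def)
  also have "k + gcd m n + y * n = k + x * m"
    using xy by (simp add: algebra_simps)
  also have "f (k + x * m) = f k"
    using periodic_from_mult[OF m, of x] \<open>a \<le> k\<close> by (simp add: periodic_from_def)
  finally show "f (k + gcd m n) = f k" .
qed

lemma tperiodic_iff: "tperiodic s n \<longleftrightarrow> 0 < n \<and> periodic_from 1 (tseq s) n"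
  by (simp add: tperiodic_def periodic_from_def)

lemma tseq_0 [simp]: "tseq s 0 = 0"
  by (simp add: tseq_def)

lemma tseq_Suc: "tseq s (Suc k) = (tseq s k + s (Suc k)) mod 2"
  by (simp add: tseq_def mod_add_left_eq)

lemma tseq_le_1: "tseq s k \<le> 1"
  by (simp add: tseq_def)

lemma tseq_add_period:
  assumes "periodic_from 1 s p"
  shows "tseq s (k + p) = (tseq s p + tseq s k) mod 2"
proof (induction k)
  case 0
  then show ?case by (simp add: tseq_def)
next
  case (Suc k)
  have "s (Suc k + p) = s (Suc k)"
    using assms[unfolded periodic_from_def, rule_format, of "Suc k"] by simp
  with Suc show ?case by (simp add: tseq_Suc mod_add_left_eq mod_add_right_eq add.assoc)
qed

lemma mod_2_eq_tseq_Suc: "s (Suc k) mod 2 = (tseq s (Suc k) + tseq s k) mod 2"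
  by (simp add: tseq_Suc) presburger

lemma periodic_from_tseq_imp_mod_2:
  assumes "periodic_from a (tseq s) n"
  shows "periodic_from (Suc a) (\<lambda>k. s k mod 2) n"
  unfolding periodic_from_def
proof (intro allI impI)
  fix k assume "Suc a \<le> k"
  then obtain i where "k = Suc i" "a \<le> i" by (cases k) auto
  then show "s (k + n) mod 2 = s k mod 2"
    using assms[unfolded periodic_from_def, rule_format, of i]
      assms[unfolded periodic_from_def, rule_format, of "Suc i"]
      mod_2_eq_tseq_Suc[of s i] mod_2_eq_tseq_Suc[of s "i + n"]
    by simp
qed

section \<open>The kneading sequences K_j\<close>

lemma K_le_1: "K j k \<le> 1"
proof -
  have "K j k \<in> set (kblock j)"
    by (simp add: K_def)
  then show ?thesis using kblock_01[of j] by auto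
qed

lemma K_Suc_eq: "k < 2 ^ Suc j \<Longrightarrow> K (Suc j) k = K j k"
proof (cases k)
  case 0
  \<comment> \<open>by truncated subtraction, K j 0 is the first symbol of the block\<close>
  have "Suc 0 < 2 ^ Suc j" using one_less_power[of "2::nat" "Suc j"] by simp
  then show ?thesis using nth_kblock_Suc[of 0 j] 0 by (simp add: K_def)
qed (use nth_kblock_Suc[of "k - 1" j] in \<open>simp add: K_def\<close>)

lemma K_stable:
  assumes "k < 2 ^ Suc j"
  shows "j \<le> m \<Longrightarrow> K m k = K j k"
proof (induction m rule: dec_induct)
  case (step n)
  have "(2::nat) ^ Suc j \<le> 2 ^ Suc n"
    using step.hyps by (intro power_increasing) auto
  with assms have "k < 2 ^ Suc n" by (rule less_le_trans)
  then show ?case using step.IH K_Suc_eq[of k n] by simp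
qed simp

lemma K_periodic: "periodic_from 1 (K j) (2 ^ j)"
  unfolding periodic_from_def
proof (intro allI impI)
  fix k :: nat assume "1 \<le> k"
  then have "k + 2 ^ j - 1 = (k - 1) + 2 ^ j" by simp
  then show "K j (k + 2 ^ j) = K j k" by (simp add: K_def)
qed

lemma K_Suc_odd: "K (Suc j) (Suc (2 * k)) = 1"
proof -
  have idx: "(Suc (2 * k) - 1) mod 2 ^ Suc j = 2 * (k mod 2 ^ j)"
    using mult_mod_right[of 2 k "2 ^ j"] by simp
  have "K (Suc j) (Suc (2 * k)) = feig (kblock j) ! (2 * (k mod 2 ^ j))"
    by (simp only: K_def length_kblock idx) (simp only: kblock_Suc)
  also have "\<dots> = 1"
    by (rule nth_feig_even) simp
  finally show ?thesis .
qed

lemma K_Suc_double: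
  assumes "0 < k"
  shows "K (Suc j) (2 * k) = 1 - K j k"
proof -
  have "2 * k - 1 = Suc (2 * (k - 1))"
    using assms by simp
  then have idx: "(2 * k - 1) mod 2 ^ Suc j = Suc (2 * ((k - 1) mod 2 ^ j))"
    using mod_mult2_eq[of "Suc (2 * (k - 1))" 2 "2 ^ j"] by simp
  have "K (Suc j) (2 * k) = feig (kblock j) ! Suc (2 * ((k - 1) mod 2 ^ j))"
    by (simp only: K_def length_kblock idx) (simp only: kblock_Suc)
  also have "\<dots> = (if K j k = 1 then 0 else 1)"
    by (simp add: nth_feig_odd K_def)
  finally show ?thesis
    using K_le_1[of j k] by auto
qed

lemma tseq_K_antiperiodic: "tseq (K j) (k + 2 ^ j) = 1 - tseq (K j) k"
proof -
  have "(\<Sum>i=1..2 ^ j. K j i) = (\<Sum>i<2 ^ j. kblock j ! i)"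
    by (simp add: sum.atLeast1_atMost_eq K_def)
  also have "\<dots> = sum_list (kblock j)"
    by (simp add: sum_list_sum_nth atLeast0LessThan)
  finally have "tseq (K j) (2 ^ j) = 1"
    using odd_sum_list_kblock[of j] by (simp add: tseq_def odd_iff_mod_2_eq_one)
  then show ?thesis
    using tseq_add_period[OF K_periodic, of j k] tseq_le_1[of "K j" k] by (cases "tseq (K j) k") auto
qed

lemma tperiodic_K: "tperiodic (K j) (2 ^ Suc j)"
proof -
  have "tseq (K j) (k + 2 ^ Suc j) = tseq (K j) k" for k
    using tseq_K_antiperiodic[of j k] tseq_K_antiperiodic[of j "k + 2 ^ j"] tseq_le_1[of "K j" k]
    by (simp add: add.assoc mult_2)
  then show ?thesis by (simp add: tperiodic_def)
qed

lemma not_tperiodic_K: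
  assumes "0 < n" "n < 2 ^ Suc j"
  shows "\<not> tperiodic (K j) n"
proof
  assume "tperiodic (K j) n"
  then have "periodic_from 1 (tseq (K j)) (gcd n (2 ^ Suc j))"
    using tperiodic_K[of j] assms by (intro periodic_from_gcd) (auto simp: tperiodic_iff)
  moreover have "gcd n (2 ^ Suc j) dvd 2 ^ Suc j"
    by simp
  then obtain b where b: "b \<le> Suc j" "gcd n (2 ^ Suc j) = 2 ^ b"
    using divides_primepow_nat[OF two_is_prime_nat] by blast
  moreover have "b \<le> j"
    using b assms gcd_le1_nat[of n "2 ^ Suc j"] by (metis le_SucE less_irrefl order.strict_trans1)
  ultimately have "periodic_from 1 (tseq (K j)) (2 ^ (j - b) * 2 ^ b)"
    by (metis periodic_from_mult)
  then have "periodic_from 1 (tseq (K j)) (2 ^ j)"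
    using \<open>b \<le> j\<close> by (simp flip: power_add)
  then have "tseq (K j) (1 + 2 ^ j) = tseq (K j) 1"
    unfolding periodic_from_def by blast
  then show False
    using tseq_K_antiperiodic[of j 1] tseq_le_1[of "K j" 1] by (simp add: add.commute) arith
qed

lemma Least_tperiodic_K: "(LEAST n. tperiodic (K j) n) = 2 ^ Suc j"
proof (rule Least_equality)
  fix m assume "tperiodic (K j) m"
  then show "2 ^ Suc j \<le> m"
    using not_tperiodic_K[of m j] by (force simp: tperiodic_def)
qed (rule tperiodic_K)

lemma eps_0 [simp]: "eps s 0 = 1"
  by (simp add: eps_def)

lemma norm_eps: "norm (eps s k) = 1"
  using tseq_le_1[of s k] by (cases "tseq s k") (auto simp: eps_def)

lemma eps_K_antiperiodic: "eps (K j) (k + 2 ^ j) = - eps (K j) k"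
  using tseq_le_1[of "K j" k] by (cases "tseq (K j) k") (auto simp: eps_def tseq_K_antiperiodic)

lemma sum_antiperiodic:
  fixes c :: "nat \<Rightarrow> 'a::comm_ring_1"
  assumes "\<And>k. k < m \<Longrightarrow> c (k + m) = - c k"
  shows "(\<Sum>k<2 * m. c k * z ^ k) = (1 - z ^ m) * (\<Sum>k<m. c k * z ^ k)"
proof -
  have "(\<Sum>k<2 * m. c k * z ^ k) = (\<Sum>k=0..<m. c k * z ^ k) + (\<Sum>k=m..<m + m. c k * z ^ k)"
    by (simp add: mult_2 lessThan_atLeast0 sum.atLeastLessThan_concat)
  also have "(\<Sum>k=m..<m + m. c k * z ^ k) = (\<Sum>k<m. c (k + m) * z ^ (k + m))"
    using sum.shift_bounds_nat_ivl[of "\<lambda>k. c k * z ^ k" 0 m m] by (simp add: lessThan_atLeast0)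
  also have "\<dots> = (- (z ^ m)) * (\<Sum>k<m. c k * z ^ k)"
    by (simp add: assms sum_distrib_left power_add algebra_simps)
  finally show ?thesis by (simp add: lessThan_atLeast0 algebra_simps)
qed

lemma sum_eps_K_eq_prod: "(\<Sum>k<2 ^ Suc j. eps (K j) k * z ^ k) = (\<Prod>n\<le>j. 1 - z ^ 2 ^ n)"
proof (induction j)
  case 0
  have "tseq (K 0) 1 = 1"
    by (simp add: tseq_def K_def kblock_def)
  then show ?case by (simp add: eps_def numeral_2_eq_2)
next
  case (Suc j)
  have "eps (K (Suc j)) k = eps (K j) k" if "k < 2 ^ Suc j" for k
    using that by (simp add: eps_def tseq_def K_Suc_eq)
  then have "(\<Sum>k<2 ^ Suc j. eps (K (Suc j)) k * z ^ k) = (\<Prod>n\<le>j. 1 - z ^ 2 ^ n)"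
    using Suc.IH by simp
  moreover have "(\<Sum>k<2 ^ Suc (Suc j). eps (K (Suc j)) k * z ^ k)
      = (1 - z ^ 2 ^ Suc j) * (\<Sum>k<2 ^ Suc j. eps (K (Suc j)) k * z ^ k)"
    using sum_antiperiodic[of "2 ^ Suc j" "eps (K (Suc j))" z] eps_K_antiperiodic[of "Suc j"]
    by (simp only: power_Suc[of 2 "Suc j"])
  ultimately show ?case
    by (simp add: mult.commute)
qed

lemma zeta_K: "1 / zeta (K j) z = (1 - z) * (\<Prod>n\<le>j. 1 - z ^ 2 ^ n)"
proof -
  obtain m where m: "2 ^ Suc j = Suc m"
    using not0_implies_Suc[of "2 ^ Suc j"] by auto
  have "(\<Sum>k<2 ^ Suc j. eps (K j) k * z ^ k) = 1 + (\<Sum>k=1..2 ^ Suc j - 1. eps (K j) k * z ^ k)"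
    unfolding m sum.lessThan_Suc_shift by (simp add: sum.atLeast1_atMost_eq)
  then show ?thesis
    using tperiodic_K[of j] sum_eps_K_eq_prod[of j z]
    by (auto simp: zeta_def Least_tperiodic_K Let_def)
qed

section \<open>The limit sequence K_\<infinity>\<close>

lemma Kinf_eq_K:
  assumes "k < 2 ^ Suc j"
  shows "Kinf k = K j k"
proof -
  have ev: "eventually (\<lambda>m. K m k = K j k) sequentially"
    unfolding eventually_sequentially using K_stable[OF assms] by blast
  show ?thesis unfolding Kinf_def
  proof (rule the_equality)
    show "eventually (\<lambda>m. K m k = K j k) sequentially" by (rule ev)
  next
    fix b assume "eventually (\<lambda>m. K m k = b) sequentially"
    then have "eventually (\<lambda>m. K m k = b \<and> K m k = K j k) sequentially"
      using ev by (rule eventually_conj)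
    then have "\<exists>m. K m k = b \<and> K m k = K j k"
      by (rule eventually_happens'[OF sequentially_bot])
    then show "b = K j k" by auto
  qed
qed

lemma Kinf_eq_K_of_le:
  assumes "k \<le> j"
  shows "Kinf k = K j k"
proof (rule Kinf_eq_K)
  show "k < 2 ^ Suc j" using assms less_exp[of j] power_Suc[of "2::nat" j] by linarith
qed

lemma Kinf_le_1: "Kinf k \<le> 1"
  using Kinf_eq_K_of_le[of k k] K_le_1[of k k] by simp

lemma Kinf_odd: "Kinf (Suc (2 * k)) = 1"
  using Kinf_eq_K_of_le[of "Suc (2 * k)" "Suc (2 * k)"] K_Suc_odd[of "2 * k" k] by simp

lemma Kinf_double: "0 < k \<Longrightarrow> Kinf (2 * k) = 1 - Kinf k"
  using Kinf_eq_K_of_le[of "2 * k" "Suc (2 * k)"] Kinf_eq_K_of_le[of k "2 * k"] K_Suc_double[of k "2 * k"]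
  by simp

lemma tseq_Kinf_eq: "k < 2 ^ Suc j \<Longrightarrow> tseq Kinf k = tseq (K j) k"
  unfolding tseq_def by (intro arg_cong[where f = "\<lambda>x. x mod 2"] sum.cong) (auto intro!: Kinf_eq_K)

lemma periodic_from_Kinf_half:
  assumes "periodic_from a Kinf (2 * m)"
  shows "periodic_from (Suc a) Kinf m"
  unfolding periodic_from_def
proof (intro allI impI)
  fix k assume "Suc a \<le> k"
  then have "Kinf (2 * (k + m)) = Kinf (2 * k)"
    using assms by (simp add: periodic_from_def distrib_left)
  then have "1 - Kinf (k + m) = 1 - Kinf k"
    using \<open>Suc a \<le> k\<close> Kinf_double[of "k + m"] Kinf_double[of k] by simp
  then show "Kinf (k + m) = Kinf k"
    using Kinf_le_1[of k] Kinf_le_1[of "k + m"] by arith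
qed

lemma not_periodic_from_Kinf_odd:
  assumes "odd n"
  shows "\<not> periodic_from a Kinf n"
proof
  assume per: "periodic_from a Kinf n"
  have one: "Kinf e = 1" if "even e" "n + a \<le> e" for e
  proof -
    have "Kinf e = Kinf (e - n)"
      using per[unfolded periodic_from_def, rule_format, of "e - n"] that by simp
    moreover have "odd (e - n)"
      using that assms by simp
    then obtain i where "e - n = Suc (2 * i)"
      by (rule oddE) simp
    ultimately show ?thesis using Kinf_odd by simp
  qed
  have "Kinf (2 * (2 * Suc (n + a))) = 1 - Kinf (2 * Suc (n + a))"
    by (rule Kinf_double) simp
  then show False
    using one[of "2 * Suc (n + a)"] one[of "2 * (2 * Suc (n + a))"] by simp
qed

lemma not_periodic_from_Kinf: "0 < n \<Longrightarrow> \<not> periodic_from a Kinf n"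
proof (induction n arbitrary: a rule: less_induct)
  case (less n)
  show ?case
  proof (cases "even n")
    case True
    then obtain m where m: "n = 2 * m" by blast
    then have "\<not> periodic_from (Suc a) Kinf m"
      using less by simp
    then show ?thesis
      using m periodic_from_Kinf_half by blast
  qed (rule not_periodic_from_Kinf_odd)
qed

lemma not_tperiodic_Kinf: "\<not> tperiodic Kinf n"
proof
  assume "tperiodic Kinf n"
  then have "periodic_from 2 (\<lambda>k. Kinf k mod 2) n"
    using periodic_from_tseq_imp_mod_2[of 1 Kinf n] by (simp add: tperiodic_iff numeral_2_eq_2)
  moreover have "Kinf k mod 2 = Kinf k" for k
    using Kinf_le_1[of k] by simp
  ultimately show False
    using not_periodic_from_Kinf[of n 2] \<open>tperiodic Kinf n\<close> by (simp add: tperiodic_def)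
qed

section \<open>Zeros and convergence in the unit disc\<close>

lemma norm_eq_1_if_prod_one_minus_power_eq_0:
  fixes z :: "'a::real_normed_field"
  assumes "(1 - z) * (\<Prod>n\<le>j. 1 - z ^ 2 ^ n) = 0"
  shows "norm z = 1"
proof -
  obtain m where "0 < m" "z ^ m = 1"
  proof (cases "z = 1")
    case False
    with assms obtain n where "z ^ 2 ^ n = 1"
      by (auto simp: prod_zero_iff)
    then show ?thesis using that[of "2 ^ n"] by simp
  qed (use that[of 1] in simp)
  then show ?thesis
    using power_eq_1_iff[of z m] by simp
qed

lemma one_minus_power_neq_0:
  fixes z :: "'a::real_normed_div_algebra"
  assumes "norm z < 1" "0 < m"
  shows "1 - z ^ m \<noteq> 0"
  using assms power_eq_1_iff[of z m] by auto

lemma convergent_prod_one_minus_power_2: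
  fixes z :: "'a::{real_normed_field, banach}"
  assumes "norm z < 1"
  shows "convergent_prod (\<lambda>n. 1 - z ^ 2 ^ n)"
proof (intro abs_convergent_prod_imp_convergent_prod summable_imp_abs_convergent_prod)
  have "norm z ^ 2 ^ n \<le> norm z ^ n" for n
    using assms by (intro power_decreasing less_imp_le[OF less_exp]) auto
  then show "summable (\<lambda>n. norm (1 - z ^ 2 ^ n - 1))"
    using assms by (intro summable_comparison_test[OF _ summable_geometric[of "norm z"]])
      (auto simp: norm_power)
qed

lemma sums_eps_Kinf:
  assumes "cmod z < 1"
  shows "(\<lambda>k. eps Kinf k * z ^ k) sums (\<Prod>n. 1 - z ^ 2 ^ n)"
proof -
  have "summable (\<lambda>k. eps Kinf k * z ^ k)"
    using assms by (intro summable_comparison_test[OF _ summable_geometric[of "cmod z"]])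
      (auto simp: norm_mult norm_power norm_eps)
  then have "(\<lambda>j. \<Sum>k<2 ^ Suc j. eps Kinf k * z ^ k) \<longlonglongrightarrow> (\<Sum>k. eps Kinf k * z ^ k)"
    by (intro LIMSEQ_subseq_LIMSEQ[OF summable_LIMSEQ, unfolded o_def] strict_monoI) simp_all
  moreover have "(\<Sum>k<2 ^ Suc j. eps Kinf k * z ^ k) = (\<Prod>n\<le>j. 1 - z ^ 2 ^ n)" for j
    using sum_eps_K_eq_prod[of j z] by (simp add: eps_def tseq_Kinf_eq)
  ultimately have "(\<lambda>j. \<Prod>n\<le>j. 1 - z ^ 2 ^ n) \<longlonglongrightarrow> (\<Sum>k. eps Kinf k * z ^ k)"
    by simp
  then have "(\<Sum>k. eps Kinf k * z ^ k) = (\<Prod>n. 1 - z ^ 2 ^ n)"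
    using convergent_prod_LIMSEQ[OF convergent_prod_one_minus_power_2[OF assms]] by (rule LIMSEQ_unique)
  with \<open>summable _\<close> show ?thesis
    by (simp add: summable_sums_iff)
qed

lemma zeta_Kinf:
  assumes "cmod z < 1"
  shows "1 / zeta Kinf z = (1 - z) * (\<Prod>n. 1 - z ^ 2 ^ n)"
proof -
  have "1 + (\<Sum>k. eps Kinf (Suc k) * z ^ Suc k) = (\<Prod>n. 1 - z ^ 2 ^ n)"
    using sums_eps_Kinf[OF assms] suminf_split_head[of "\<lambda>k. eps Kinf k * z ^ k"]
    by (simp add: sums_iff)
  then show ?thesis
    using not_tperiodic_Kinf by (simp add: zeta_def)
qed

lemma zeta_K_tendsto_zeta_Kinf:
  assumes "cmod z < 1"
  shows "(\<lambda>j. zeta (K j) z) \<longlonglongrightarrow> zeta Kinf z"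
proof -
  have prod_nonzero: "(\<Prod>n. 1 - z ^ 2 ^ n) \<noteq> 0"
    using one_minus_power_neq_0[OF assms]
    by (intro prodinf_nonzero convergent_prod_one_minus_power_2 assms) simp
  have "1 - z \<noteq> 0"
    using one_minus_power_neq_0[OF assms, of 1] by simp
  with prod_nonzero have "(\<lambda>j. 1 / ((1 - z) * (\<Prod>n\<le>j. 1 - z ^ 2 ^ n)))
      \<longlonglongrightarrow> 1 / ((1 - z) * (\<Prod>n. 1 - z ^ 2 ^ n))"
    by (intro tendsto_intros convergent_prod_LIMSEQ convergent_prod_one_minus_power_2 assms) simp
  then show ?thesis
    unfolding zeta_K[symmetric] zeta_Kinf[OF assms, symmetric] by simp
qed

theorem mainTheorem8:
  shows "(\<forall>j\<ge>1.
            (\<forall>z. 1 / zeta (K j) z = (1 - z) * (\<Prod>n\<le>j. 1 - z ^ (2 ^ n))) \<and>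
            (\<forall>z. (1 - z) * (\<Prod>n\<le>j. 1 - z ^ (2 ^ n)) = 0 \<longrightarrow> cmod z = 1))
       \<and> (\<forall>z. cmod z < 1 \<longrightarrow> (\<lambda>j. zeta (K j) z) \<longlonglongrightarrow> zeta Kinf z)
       \<and> (\<forall>z. cmod z < 1 \<longrightarrow> 1 / zeta Kinf z = (1 - z) * (\<Prod>n. 1 - z ^ (2 ^ n)))"
  using zeta_K norm_eq_1_if_prod_one_minus_power_eq_0 zeta_K_tendsto_zeta_Kinf zeta_Kinf
  by blast

end
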